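(* Let $0<\phi<\pi/6$, $T>0$, and let $r(y,t)=-\dfrac{15y}{8x^{7/2}}$ where $x=t+(3y/2)^{2/3}$. Then $R=\mathcal L^{-1}r$ satisfies $\|R\|_\nu<C\nu^{-1/3}$ for $\nu>1$, with $C$ independent of $\nu$ and $T$.
   Context: Powers use principal branches; $y$ ranges over a sector $|\arg y|<\pi/2+\phi'$ ($\phi<\phi'<\pi/6$), $|y|$ large. $\mathcal S_\phi=\{p:\arg p\in(-\phi,\phi),0<|p|<\infty\}$. $\mathcal L^{-1}g(p,t)=\frac1{2\pi i}\int_{\mathcal C}e^{py}g(y,t)dy$ with $\mathcal C=\{c+ire^{i\phi'\mathrm{sgn}(r)}:r\in\mathbb R\}$, $c>0$, traversed with $r$ increasing. With $\mathcal K=\overline{\mathcal S_\phi}\times[0,T]$, $\|G\|_\nu=M_0\sup_{\mathcal K}(1+|p|^2)e^{-\nu|p|}|G(p,t)|$, $M_0=\sup_{s\ge0}\frac{2(1+s^2)(\ln(1+s^2)+s\arctan s)}{s(s^2+4)}$. *)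

theory Defs
  imports "HOL-Analysis.Analysis"
begin

definition r_fun :: "complex \<Rightarrow> real \<Rightarrow> complex" where
  "r_fun y t = - (15 * y) / (8 * (complex_of_real t + (3 * y / 2) powr (2 / 3)) powr (7 / 2))"

definition contour_pt :: "real \<Rightarrow> real \<Rightarrow> real \<Rightarrow> complex" where
  "contour_pt c \<phi>' s = complex_of_real c + \<i> * complex_of_real s * exp (\<i> * complex_of_real (\<phi>' * sgn s))"

text \<open>Inverse Laplace transform along C (dy = i e^(i phi' sgn s) ds).\<close>
definition invLaplace :: "real \<Rightarrow> real \<Rightarrow> (complex \<Rightarrow> real \<Rightarrow> complex) \<Rightarrow> complex \<Rightarrow> real \<Rightarrow> complex" where
  "invLaplace c \<phi>' g p t =
     (1 / (2 * complex_of_real pi * \<i>)) *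
     integral UNIV (\<lambda>s::real. exp (p * contour_pt c \<phi>' s) * g (contour_pt c \<phi>' s) t
                              * (\<i> * exp (\<i> * complex_of_real (\<phi>' * sgn s))))"

definition sector :: "real \<Rightarrow> complex set" where
  "sector \<phi> = {p. p \<noteq> 0 \<and> - \<phi> < Arg p \<and> Arg p < \<phi>}"

definition M0 :: real where
  "M0 = Sup ((\<lambda>s::real. 2 * (1 + s\<^sup>2) * (ln (1 + s\<^sup>2) + s * arctan s) / (s * (s\<^sup>2 + 4))) ` {0..})"

text \<open>The weighted norm (as an extended real, so that an infinite supremum is +infinity).\<close>
definition nu_norm :: "real \<Rightarrow> real \<Rightarrow> real \<Rightarrow> (complex \<Rightarrow> real \<Rightarrow> complex) \<Rightarrow> ereal" where
  "nu_norm \<phi> T \<nu> G = ereal M0 *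
     (SUP (p, t) \<in> closure (sector \<phi>) \<times> {0..T}.
        ereal ((1 + (cmod p)\<^sup>2) * exp (- \<nu> * cmod p) * cmod (G p t)))"

end

theory Submission
  imports Defs "HOL-Complex_Analysis.Complex_Analysis"
begin

(* On the contour the inverse Laplace integral splits into two rays c + s exp (+-i (pi/2 + phi')),
   s >= 0. For p in the closed sector, |exp (p y)| <= exp (c |p|) along both rays, and
   |r(y,t)| <= 30 |y|^(-4/3) because Re (w^(2/3)) >= -|w^(2/3)|/2 keeps t + (3y/2)^(2/3) away
   from 0. Hence each ray integral is O(exp (c |p|) c^(-1/3)). The function r is analytic off the
   negative real axis and decays on the horizontal segments joining two abscissae, so by Cauchy's
   theorem the difference of the two ray integrals does not depend on c > 0; choosing c = 1/|p|
   gives |R(p,t)| <= K |p|^(1/3). Finally (1 + rho^2) exp (-nu rho) rho^(1/3) <= 32 nu^(-1/3). *)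

section \<open>Principal powers and bounds on r\<close>

lemma Re_powr_ge:
  fixes z :: complex and a :: real
  assumes "z \<noteq> 0" "0 \<le> a" "a \<le> 1"
  shows "cos (a * pi) * norm (z powr a) \<le> Re (z powr a)"
proof -
  define \<theta> where "\<theta> = Im (Ln z)"
  have "\<bar>\<theta>\<bar> \<le> pi"
    using mpi_less_Im_Ln[OF assms(1)] Im_Ln_le_pi[OF assms(1)] unfolding \<theta>_def by auto
  hence "\<bar>a * \<theta>\<bar> \<le> a * pi"
    using assms(2) by (simp add: abs_mult mult_left_mono)
  hence "cos (a * pi) \<le> cos (a * \<theta>)"
    using assms(2,3) cos_monotone_0_pi_le[of "\<bar>a * \<theta>\<bar>" "a * pi"] by (simp add: mult_left_le_one_le)
  hence "exp (a * Re (Ln z)) * cos (a * pi) \<le> exp (a * Re (Ln z)) * cos (a * \<theta>)"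
    by (intro mult_left_mono) auto
  thus ?thesis
    using assms(1) by (simp add: powr_def Re_exp \<theta>_def mult.commute)
qed

lemma powr_notin_nonpos_Reals:
  fixes z :: complex and a :: real
  assumes "z \<notin> \<real>\<^sub>\<le>\<^sub>0" "0 \<le> a" "a \<le> 1"
  shows "z powr a \<notin> \<real>\<^sub>\<le>\<^sub>0"
proof
  assume "z powr a \<in> \<real>\<^sub>\<le>\<^sub>0"
  have "z \<noteq> 0" using assms(1) by auto
  define \<theta> where "\<theta> = Im (Ln z)"
  have "\<bar>\<theta>\<bar> < pi"
    using mpi_less_Im_Ln[OF \<open>z \<noteq> 0\<close>] Im_Ln_less_pi[OF assms(1)] unfolding \<theta>_def by auto
  moreover have "\<bar>a * \<theta>\<bar> \<le> \<bar>\<theta>\<bar>"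
    using assms(2,3) by (simp add: abs_mult mult_left_le_one_le)
  ultimately have bound: "\<bar>a * \<theta>\<bar> < pi" by linarith
  have "sin (a * \<theta>) = 0" "cos (a * \<theta>) \<le> 0"
    using \<open>z powr a \<in> \<real>\<^sub>\<le>\<^sub>0\<close> \<open>z \<noteq> 0\<close>
    by (auto simp: complex_nonpos_Reals_iff powr_def Re_exp Im_exp \<theta>_def mult_le_0_iff)
  then obtain n :: int where "a * \<theta> = n * pi" using sin_zero_iff_int2 by blast
  with bound have "a * \<theta> = 0" by (cases "n = 0") (auto simp: abs_mult)
  with \<open>cos (a * \<theta>) \<le> 0\<close> show False by simp
qed

lemma of_real_add_notin_nonpos_Reals:
  fixes w :: complex
  assumes "w \<notin> \<real>\<^sub>\<le>\<^sub>0" "0 \<le> t"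
  shows "of_real t + w \<notin> \<real>\<^sub>\<le>\<^sub>0"
  using assms by (auto simp: complex_nonpos_Reals_iff)

lemma norm_of_real_add_ge:
  fixes w :: complex
  assumes "0 \<le> t" "- norm w / 2 \<le> Re w"
  shows "norm w / 2 \<le> norm (of_real t + w)"
proof (rule power2_le_imp_le)
  have "(norm (of_real t + w))\<^sup>2 = t\<^sup>2 + 2 * t * Re w + (norm w)\<^sup>2"
    unfolding cmod_power2 by (simp add: power2_eq_square algebra_simps)
  also have "\<dots> \<ge> (t - norm w / 2)\<^sup>2 + 3 / 4 * (norm w)\<^sup>2"
    using mult_left_mono[OF assms(2), of "2 * t"] assms(1) by (simp add: power2_eq_square algebra_simps)
  moreover have "(norm w / 2)\<^sup>2 \<le> 3 / 4 * (norm w)\<^sup>2"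
    by (simp add: power_divide)
  ultimately show "(norm w / 2)\<^sup>2 \<le> (norm (of_real t + w))\<^sup>2"
    using zero_le_power2[of "t - norm w / 2"] by linarith
qed simp

lemma r_fun_holomorphic:
  assumes "0 \<le> t"
  shows "(\<lambda>y. r_fun y t) holomorphic_on - \<real>\<^sub>\<le>\<^sub>0"
  unfolding r_fun_def
proof (intro holomorphic_intros)
  fix y :: complex
  assume "y \<in> - \<real>\<^sub>\<le>\<^sub>0"
  then show "3 * y / 2 \<notin> \<real>\<^sub>\<le>\<^sub>0"
    by (auto simp: complex_nonpos_Reals_iff)
  then have "(3 * y / 2) powr (2 / 3) \<notin> \<real>\<^sub>\<le>\<^sub>0"
    using powr_notin_nonpos_Reals[of "3 * y / 2" "2 / 3"] by simp
  then show "of_real t + (3 * y / 2) powr (2 / 3) \<notin> \<real>\<^sub>\<le>\<^sub>0"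
    using assms by (rule of_real_add_notin_nonpos_Reals)
  then show "8 * (of_real t + (3 * y / 2) powr (2 / 3)) powr (7 / 2) \<noteq> 0"
    by auto
qed simp

lemma norm_r_fun_le:
  assumes "y \<noteq> 0" "0 \<le> t"
  shows "norm (r_fun y t) \<le> 30 * norm y powr (- 4 / 3)"
proof -
  define w where "w = (3 * y / 2) powr (2 / 3)"
  define x where "x = of_real t + w"
  have "norm w = (3 / 2 * norm y) powr (2 / 3)"
    unfolding w_def by (subst norm_powr_real_powr') (auto simp: norm_divide)
  hence "norm y powr (2 / 3) \<le> norm w"
    by (simp add: powr_mono2)
  moreover have "- norm w / 2 \<le> Re w"
    using Re_powr_ge[of "3 * y / 2" "2 / 3"] assms(1) by (simp add: w_def cos_120)
  hence "norm w / 2 \<le> norm x"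
    unfolding x_def using assms(2) by (rule norm_of_real_add_ge[rotated])
  ultimately have x_ge: "norm y powr (2 / 3) / 2 \<le> norm x"
    by linarith
  have "norm y powr (7 / 3) / 16 \<le> norm y powr (7 / 3) / 2 powr (7 / 2)"
    using powr_mono[of "7 / 2" 4 2] by (intro divide_left_mono) auto
  also have "\<dots> = (norm y powr (2 / 3) / 2) powr (7 / 2)"
    by (simp add: powr_divide powr_powr)
  also have "\<dots> \<le> norm x powr (7 / 2)"
    using x_ge by (intro powr_mono2) auto
  finally have x_powr_ge: "norm y powr (7 / 3) / 16 \<le> norm x powr (7 / 2)" .
  have y_powr_pos: "0 < norm y powr (7 / 3) / 16"
    using assms(1) by simp
  have "norm (x powr (7 / 2)) = norm x powr (7 / 2)"
    by (subst norm_powr_real_powr') auto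
  hence "norm (r_fun y t) = 15 * norm y / (8 * norm x powr (7 / 2))"
    unfolding r_fun_def w_def[symmetric] x_def[symmetric] by (simp add: norm_divide norm_mult)
  also have "\<dots> \<le> 15 * norm y / (8 * (norm y powr (7 / 3) / 16))"
    using x_powr_ge y_powr_pos by (intro divide_left_mono mult_left_mono mult_pos_pos) auto
  also have "\<dots> = 30 * (norm y powr 1 / norm y powr (7 / 3))"
    using assms(1) by simp
  also have "\<dots> = 30 * norm y powr (- 4 / 3)"
    unfolding powr_diff [symmetric] by simp
  finally show ?thesis .
qed

section \<open>Integrals along rays\<close>

lemma tendsto_powr_plus_at_top:
  fixes c e :: real
  assumes "e < 0"
  shows "((\<lambda>s. (c + s) powr e) \<longlongrightarrow> 0) at_top"
  using assms by (intro tendsto_neg_powr filterlim_tendsto_add_at_top[OF tendsto_const filterlim_ident])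

lemma has_integral_powr_plus_to_inf:
  fixes c e :: real
  assumes "e < - 1" "0 < c"
  shows "((\<lambda>s. (c + s) powr e) has_integral - (c powr (e + 1)) / (e + 1)) {0..}"
proof (intro has_integral_to_inf integrable_continuous_interval continuous_intros)
  define F where "F \<equiv> \<lambda>s. (c + s) powr (e + 1) / (e + 1)"
  have "((\<lambda>s. (c + s) powr e) has_integral (F y - F 0)) {0..y}" if "0 \<le> y" for y
    unfolding F_def using assms that
    by (intro fundamental_theorem_of_calculus that)
       (auto intro!: derivative_eq_intros simp flip: has_real_derivative_iff_has_vector_derivative)
  then have "\<forall>\<^sub>F y in at_top. integral {0..y} (\<lambda>s. (c + s) powr e) = F y - F 0"
    by (meson eventually_at_top_linorderI integral_unique)
  moreover have "((\<lambda>y. F y - F 0) \<longlongrightarrow> 0 / (e + 1) - F 0) at_top"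
    unfolding F_def using assms(1)
    by (intro tendsto_diff tendsto_divide tendsto_powr_plus_at_top tendsto_const) auto
  ultimately show "((\<lambda>y. integral {0..y} (\<lambda>s. (c + s) powr e)) \<longlongrightarrow> - (c powr (e + 1)) / (e + 1)) at_top"
    by (simp add: F_def filterlim_cong)
qed (use assms in auto)

lemma tendsto_integral_atLeastAtMost:
  fixes g :: "real \<Rightarrow> 'b::banach"
  assumes "g integrable_on {a..}"
  shows "((\<lambda>b. integral {a..b} g) \<longlongrightarrow> integral {a..} g) at_top"
proof (rule tendstoI)
  fix e :: real
  assume "0 < e"
  moreover have "(g has_integral integral {a..} g) {a..}"
    using assms by (rule integrable_integral)
  ultimately obtain B where "0 < B" and B: "\<And>u v. ball 0 B \<subseteq> cbox u v \<Longrightarrow>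
      norm (integral (cbox u v) (\<lambda>x. if x \<in> {a..} then g x else 0) - integral {a..} g) < e"
    unfolding has_integral_alt'[of g] by blast
  show "\<forall>\<^sub>F b in at_top. dist (integral {a..b} g) (integral {a..} g) < e"
    using eventually_ge_at_top[of B]
  proof eventually_elim
    case (elim b)
    have "ball 0 B \<subseteq> cbox (min a (- B)) b"
      using elim by (auto simp: dist_real_def)
    hence "norm (integral (cbox (min a (- B)) b) (\<lambda>x. if x \<in> {a..} then g x else 0)
        - integral {a..} g) < e"
      by (rule B)
    moreover have "integral (cbox (min a (- B)) b) (\<lambda>x. if x \<in> {a..} then g x else 0) = integral {a..b} g"
      unfolding integral_restrict_Int by (rule arg_cong[where f = "\<lambda>S. integral S g"]) auto
    ultimately show ?case
      by (simp add: dist_norm)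
  qed
qed

lemma ball_subset_cbox_reflect:
  fixes u v :: "'a::euclidean_space"
  assumes "ball 0 B \<subseteq> cbox u v"
  shows "ball 0 B \<subseteq> cbox (- v) (- u)"
proof
  fix x :: 'a
  assume "x \<in> ball 0 B"
  hence "- x \<in> cbox u v"
    using assms by (auto simp: dist_norm)
  hence "x \<in> uminus ` cbox u v"
    by (metis image_eqI minus_minus)
  thus "x \<in> cbox (- v) (- u)"
    by simp
qed

lemma has_integral_reflect_image:
  fixes g :: "'a::euclidean_space \<Rightarrow> 'b::banach"
  assumes "(g has_integral I) S"
  shows "((\<lambda>x. g (- x)) has_integral I) (uminus ` S)"
proof -
  define G where "G = (\<lambda>x. if x \<in> S then g x else 0)"
  have "x \<in> uminus ` S \<longleftrightarrow> - x \<in> S" for x :: 'a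
    by (metis image_eqI imageE minus_minus)
  hence restrict: "(\<lambda>x. if x \<in> uminus ` S then g (- x) else 0) = (\<lambda>x. G (- x))"
    by (simp add: G_def fun_eq_iff)
  have int: "G integrable_on cbox u v" for u v
    using assms unfolding has_integral_alt' G_def by blast
  have lim: "\<exists>B>0. \<forall>u v. ball 0 B \<subseteq> cbox u v \<longrightarrow> norm (integral (cbox u v) G - I) < e"
    if "0 < e" for e
    using assms that unfolding has_integral_alt' G_def by blast
  show ?thesis
    unfolding has_integral_alt' restrict
  proof (intro conjI allI impI)
    fix u v :: 'a
    show "(\<lambda>x. G (- x)) integrable_on cbox u v"
      using int integrable_reflect[of G "- u" "- v"] by simp
  next
    fix e :: real
    assume "0 < e"
    then obtain B where "0 < B" and B: "\<And>u v. ball 0 B \<subseteq> cbox u v \<Longrightarrow> norm (integral (cbox u v) G - I) < e"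
      using lim by blast
    have "norm (integral (cbox u v) (\<lambda>x. G (- x)) - I) < e" if "ball 0 B \<subseteq> cbox u v" for u v
      using B[OF ball_subset_cbox_reflect[OF that]] integral_reflect[of "- u" "- v" G] by simp
    with \<open>0 < B\<close> show "\<exists>B>0. \<forall>u v. ball 0 B \<subseteq> cbox u v \<longrightarrow> norm (integral (cbox u v) (\<lambda>x. G (- x)) - I) < e"
      by blast
  qed
qed

lemma has_integral_split_at_0:
  fixes h :: "real \<Rightarrow> 'a::banach"
  assumes "(h has_integral I) {0..}" "(h has_integral J) {..0}"
  shows "(h has_integral I + J) UNIV"
proof -
  have "{0..} \<inter> {..0} = {0::real}"
    by auto
  hence "negligible ({0..} \<inter> {..0::real})"
    by simp
  with assms have "(h has_integral I + J) ({0..} \<union> {..0})"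
    by (intro has_integral_Un)
  moreover have "{0..} \<union> {..0} = (UNIV :: real set)"
    by auto
  ultimately show ?thesis
    by simp
qed

lemma integrable_on_ray:
  fixes f :: "complex \<Rightarrow> complex" and m :: "real \<Rightarrow> real"
  assumes "continuous_on S f" and ray: "\<And>s. 0 \<le> s \<Longrightarrow> z + of_real s * d \<in> S"
    and bound: "\<And>s. 0 \<le> s \<Longrightarrow> norm (f (z + of_real s * d)) \<le> m s"
    and "m integrable_on {0..}"
  shows "(\<lambda>s. f (z + of_real s * d) * d) integrable_on {0..}"
    and "norm (integral {0..} (\<lambda>s. f (z + of_real s * d) * d)) \<le> norm d * integral {0..} m"
proof -
  have "continuous_on {0..} (\<lambda>s::real. z + of_real s * d)"
    by (intro continuous_intros)
  moreover have "(\<lambda>s::real. z + of_real s * d) ` {0..} \<subseteq> S"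
    using ray by auto
  ultimately have "continuous_on {0..} (\<lambda>s. f (z + of_real s * d))"
    by (rule continuous_on_compose2[OF \<open>continuous_on S f\<close>])
  hence "continuous_on {0..} (\<lambda>s. f (z + of_real s * d) * d)"
    by (rule continuous_on_mult_right)
  moreover have "{0::real..} \<in> sets lebesgue"
    using borel_closed[of "{0::real..}"] by (intro sets_completionI_sets) simp
  ultimately have measurable: "(\<lambda>s. f (z + of_real s * d) * d) \<in> borel_measurable (lebesgue_on {0..})"
    by (rule continuous_imp_measurable_on_sets_lebesgue)
  have majorant: "norm (f (z + of_real s * d) * d) \<le> norm d * m s" if "s \<in> {0..}" for s
    using bound[of s] that by (simp add: norm_mult mult.commute mult_left_mono)
  have majorant_integrable: "(\<lambda>s. norm d * m s) integrable_on {0..}"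
    using integrable_on_cmult_left[OF \<open>m integrable_on {0..}\<close>, of "norm d"] by simp
  show integrable: "(\<lambda>s. f (z + of_real s * d) * d) integrable_on {0..}"
    using measurable majorant_integrable majorant \<open>{0..} \<in> sets lebesgue\<close>
    by (rule measurable_bounded_by_integrable_imp_integrable)
  have "norm (integral {0..} (\<lambda>s. f (z + of_real s * d) * d)) \<le> integral {0..} (\<lambda>s. norm d * m s)"
    using integrable majorant_integrable majorant by (rule integral_norm_bound_integral)
  also have "\<dots> = norm d * integral {0..} m"
    by simp
  finally show "norm (integral {0..} (\<lambda>s. f (z + of_real s * d) * d)) \<le> norm d * integral {0..} m" .
qed

lemma has_integral_line_primitive:
  fixes f F :: "complex \<Rightarrow> complex"
  assumes deriv: "\<And>z. z \<in> S \<Longrightarrow> (F has_field_derivative f z) (at z within S)" and "open S"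
    and "a \<le> b" and line: "\<And>s. s \<in> {a..b} \<Longrightarrow> z + of_real s * v \<in> S"
  shows "((\<lambda>s. f (z + of_real s * v) * v) has_integral F (z + of_real b * v) - F (z + of_real a * v)) {a..b}"
proof (rule fundamental_theorem_of_calculus[OF \<open>a \<le> b\<close>])
  fix s
  assume "s \<in> {a..b}"
  with deriv line \<open>open S\<close> have "(F has_field_derivative f (z + of_real s * v)) (at (z + of_real s * v))"
    by (metis at_within_open)
  moreover have "((\<lambda>w. z + w * v) has_field_derivative v) (at (of_real s))"
    by (auto intro!: derivative_eq_intros)
  ultimately have "((\<lambda>w. F (z + w * v)) has_field_derivative f (z + of_real s * v) * v) (at (of_real s))"
    by (rule DERIV_chain2)
  from has_vector_derivative_real_field[OF this]
  show "((\<lambda>s. F (z + of_real s * v)) has_vector_derivative f (z + of_real s * v) * v) (at s within {a..b})" .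
qed

lemma integral_truncated_rays_diff:
  fixes f :: "complex \<Rightarrow> complex"
  assumes "open S" "convex S" "f holomorphic_on S" "a \<le> b" "0 \<le> L"
    and rays: "\<And>x s. x \<in> {a..b} \<Longrightarrow> s \<in> {0..L} \<Longrightarrow> of_real x + of_real s * d \<in> S"
  shows "integral {0..L} (\<lambda>s. f (of_real a + of_real s * d) * d)
       - integral {0..L} (\<lambda>s. f (of_real b + of_real s * d) * d)
       = integral {a..b} (\<lambda>x. f (of_real x)) - integral {a..b} (\<lambda>x. f (of_real x + of_real L * d))"
proof -
  obtain F where F: "\<And>z. z \<in> S \<Longrightarrow> (F has_field_derivative f z) (at z within S)"
    using holomorphic_convex_primitive'[OF assms(2,1,3)] by blast
  have ray: "integral {0..L} (\<lambda>s. f (of_real x + of_real s * d) * d)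
      = F (of_real x + of_real L * d) - F (of_real x)" if "x \<in> {a..b}" for x
  proof -
    have "((\<lambda>s. f (of_real x + of_real s * d) * d) has_integral
        F (of_real x + of_real L * d) - F (of_real x + of_real 0 * d)) {0..L}"
      by (rule has_integral_line_primitive[OF F \<open>open S\<close> \<open>0 \<le> L\<close>]) (use rays[OF that] in auto)
    then have "integral {0..L} (\<lambda>s. f (of_real x + of_real s * d) * d)
        = F (of_real x + of_real L * d) - F (of_real x + of_real 0 * d)"
      by (rule integral_unique)
    then show ?thesis
      by simp
  qed
  have segment: "integral {a..b} (\<lambda>x. f (of_real x + of_real l * d))
      = F (of_real b + of_real l * d) - F (of_real a + of_real l * d)" if "l \<in> {0..L}" for l
    using has_integral_line_primitive[OF F \<open>open S\<close> \<open>a \<le> b\<close>, of "of_real l * d" 1] rays[OF _ that]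
    by (simp add: integral_unique add.commute)
  show ?thesis
    using ray[of a] ray[of b] segment[of 0] segment[of L] \<open>a \<le> b\<close> \<open>0 \<le> L\<close> by simp
qed

lemma tendsto_shifted_segment_integral:
  fixes f :: "complex \<Rightarrow> complex" and m :: "real \<Rightarrow> real"
  assumes "continuous_on S f" "a \<le> b"
    and rays: "\<And>x s. x \<in> {a..b} \<Longrightarrow> 0 \<le> s \<Longrightarrow> of_real x + of_real s * d \<in> S"
    and bound: "\<And>x s. x \<in> {a..b} \<Longrightarrow> 0 \<le> s \<Longrightarrow> norm (f (of_real x + of_real s * d)) \<le> m s"
    and "(m \<longlongrightarrow> 0) at_top"
  shows "((\<lambda>L. integral {a..b} (\<lambda>x. f (of_real x + of_real L * d))) \<longlongrightarrow> 0) at_top"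
proof (rule Lim_null_comparison)
  show "\<forall>\<^sub>F L in at_top. norm (integral {a..b} (\<lambda>x. f (of_real x + of_real L * d))) \<le> m L * (b - a)"
    using eventually_ge_at_top[of 0]
  proof eventually_elim
    case (elim L)
    show ?case
      using bound[OF _ elim] rays[OF _ elim] \<open>a \<le> b\<close>
      by (intro integral_bound continuous_intros continuous_on_compose2[OF \<open>continuous_on S f\<close>]) auto
  qed
  show "((\<lambda>L. m L * (b - a)) \<longlongrightarrow> 0) at_top"
    using \<open>(m \<longlongrightarrow> 0) at_top\<close> by (rule tendsto_mult_left_zero)
qed

lemma integral_parallel_rays_diff:
  fixes f :: "complex \<Rightarrow> complex" and m :: "real \<Rightarrow> real"
  assumes "open S" "convex S" "f holomorphic_on S" "a \<le> b"
    and rays: "\<And>x s. x \<in> {a..b} \<Longrightarrow> 0 \<le> s \<Longrightarrow> of_real x + of_real s * d \<in> S"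
    and bound: "\<And>x s. x \<in> {a..b} \<Longrightarrow> 0 \<le> s \<Longrightarrow> norm (f (of_real x + of_real s * d)) \<le> m s"
    and "m integrable_on {0..}" "(m \<longlongrightarrow> 0) at_top"
  shows "integral {0..} (\<lambda>s. f (of_real a + of_real s * d) * d)
       - integral {0..} (\<lambda>s. f (of_real b + of_real s * d) * d)
       = integral {a..b} (\<lambda>x. f (of_real x))"
proof -
  define ray where "ray x = (\<lambda>s. f (of_real x + of_real s * d) * d)" for x
  define segment where "segment L = integral {a..b} (\<lambda>x. f (of_real x + of_real L * d))" for L
  have continuous: "continuous_on S f"
    using \<open>f holomorphic_on S\<close> by (rule holomorphic_on_imp_continuous_on)
  have ray_integrable: "ray x integrable_on {0..}" if "x \<in> {a..b}" for x
    unfolding ray_def using rays[OF that] bound[OF that]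
    by (intro integrable_on_ray[OF continuous _ _ \<open>m integrable_on {0..}\<close>])
  have "((\<lambda>L. segment L) \<longlongrightarrow> 0) at_top"
    unfolding segment_def using continuous \<open>a \<le> b\<close> rays bound \<open>(m \<longlongrightarrow> 0) at_top\<close>
    by (rule tendsto_shifted_segment_integral)
  hence "((\<lambda>L. segment 0 - segment L) \<longlongrightarrow> segment 0 - 0) at_top"
    by (intro tendsto_diff tendsto_const)
  moreover have "\<forall>\<^sub>F L in at_top. segment 0 - segment L = integral {0..L} (ray a) - integral {0..L} (ray b)"
    using eventually_ge_at_top[of 0]
  proof eventually_elim
    case (elim L)
    have "\<And>x s. x \<in> {a..b} \<Longrightarrow> s \<in> {0..L} \<Longrightarrow> of_real x + of_real s * d \<in> S"
      using rays by auto
    from integral_truncated_rays_diff[OF assms(1-4) elim this] show ?case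
      by (simp add: ray_def segment_def)
  qed
  ultimately have lim_segment: "((\<lambda>L. integral {0..L} (ray a) - integral {0..L} (ray b)) \<longlongrightarrow> segment 0) at_top"
    by (simp add: tendsto_cong)
  have lim_rays: "((\<lambda>L. integral {0..L} (ray a) - integral {0..L} (ray b))
      \<longlongrightarrow> integral {0..} (ray a) - integral {0..} (ray b)) at_top"
    using \<open>a \<le> b\<close> by (intro tendsto_diff tendsto_integral_atLeastAtMost ray_integrable) auto
  have "integral {0..} (ray a) - integral {0..} (ray b) = segment 0"
    using tendsto_unique[OF trivial_limit_at_top_linorder lim_rays lim_segment] .
  then show ?thesis
    by (simp add: ray_def segment_def)
qed

section \<open>The contour\<close>

lemma sin_le_half_le_cos:
  assumes "0 \<le> \<phi>'" "\<phi>' \<le> pi / 6"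
  shows "sin \<phi>' \<le> 1 / 2" "1 / 2 \<le> cos \<phi>'"
proof -
  have "sin \<phi>' \<le> sin (pi / 6)"
    using assms by (intro sin_monotone_2pi_le) auto
  thus "sin \<phi>' \<le> 1 / 2"
    by (simp add: sin_30)
  have "cos (pi / 3) \<le> cos \<phi>'"
    using assms by (intro cos_monotone_0_pi_le) auto
  thus "1 / 2 \<le> cos \<phi>'"
    by (simp add: cos_60)
qed

(* For sigma = 1 or -1, ray_dir phi' sigma = exp (i sigma (pi/2 + phi')). The contour C of the
   inverse Laplace transform is the union of the two rays c + s ray_dir phi' sigma, s >= 0,
   the lower one (sigma = -1) traversed towards c. *)
definition ray_dir :: "real \<Rightarrow> real \<Rightarrow> complex" where
  "ray_dir \<phi>' \<sigma> = Complex (- sin \<phi>') (\<sigma> * cos \<phi>')"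

definition ray_halfplane :: "real \<Rightarrow> complex set" where
  "ray_halfplane \<sigma> = {y. 0 < inner (Complex 1 \<sigma>) y}"

lemma contour_factor_eq_ray_dir:
  assumes "s \<noteq> 0"
  shows "\<i> * exp (\<i> * of_real (\<phi>' * sgn s)) = of_real (sgn s) * ray_dir \<phi>' (sgn s)"
proof (cases "0 < s")
  case True
  hence "exp (\<i> * of_real (\<phi>' * sgn s)) = cis \<phi>'"
    by (simp add: cis_conv_exp)
  with True show ?thesis
    by (simp add: ray_dir_def complex_eq_iff)
next
  case False
  with assms have "s < 0" by simp
  hence "exp (\<i> * of_real (\<phi>' * sgn s)) = cis (- \<phi>')"
    by (simp add: cis_conv_exp)
  with \<open>s < 0\<close> show ?thesis
    by (simp add: ray_dir_def complex_eq_iff)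
qed

lemma contour_pt_eq_ray:
  assumes "s \<noteq> 0"
  shows "contour_pt c \<phi>' s = of_real c + of_real \<bar>s\<bar> * ray_dir \<phi>' (sgn s)"
proof -
  have "contour_pt c \<phi>' s = of_real c + of_real s * (\<i> * exp (\<i> * of_real (\<phi>' * sgn s)))"
    unfolding contour_pt_def by (simp add: algebra_simps)
  also have "\<dots> = of_real c + of_real \<bar>s\<bar> * ray_dir \<phi>' (sgn s)"
    unfolding contour_factor_eq_ray_dir[OF assms] by (auto simp: sgn_if abs_if)
  finally show ?thesis .
qed

lemma norm_ray_dir:
  assumes "\<sigma> \<in> {-1, 1}"
  shows "norm (ray_dir \<phi>' \<sigma>) = 1"
  using assms by (auto simp: ray_dir_def cmod_def)

lemma norm_ray_point_ge:
  assumes "\<sigma> \<in> {-1, 1}" "0 \<le> \<phi>'" "\<phi>' \<le> pi / 6" "0 \<le> x" "0 \<le> s"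
  shows "(x + s) / 2 \<le> norm (of_real x + of_real s * ray_dir \<phi>' \<sigma>)"
proof (rule power2_le_imp_le)
  have "(norm (of_real x + of_real s * ray_dir \<phi>' \<sigma>))\<^sup>2 = (x - s * sin \<phi>')\<^sup>2 + (s * cos \<phi>')\<^sup>2"
    using assms(1) unfolding cmod_power2 by (auto simp: ray_dir_def power_mult_distrib)
  also have "\<dots> = x\<^sup>2 - 2 * x * s * sin \<phi>' + s\<^sup>2 * ((sin \<phi>')\<^sup>2 + (cos \<phi>')\<^sup>2)"
    by (simp add: power2_eq_square algebra_simps del: sin_cos_squared_add3)
  also have "\<dots> = x\<^sup>2 - 2 * x * s * sin \<phi>' + s\<^sup>2"
    by simp
  also have "\<dots> \<ge> x\<^sup>2 - x * s + s\<^sup>2"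
    using mult_left_mono[OF sin_le_half_le_cos(1)[OF assms(2,3)], of "2 * x * s"] assms(4,5) by simp
  finally show "((x + s) / 2)\<^sup>2 \<le> (norm (of_real x + of_real s * ray_dir \<phi>' \<sigma>))\<^sup>2"
    using zero_le_power2[of "x - s"] by (simp add: power2_eq_square algebra_simps)
qed simp

lemma open_ray_halfplane: "open (ray_halfplane \<sigma>)"
  unfolding ray_halfplane_def by (rule open_halfspace_gt)

lemma convex_ray_halfplane: "convex (ray_halfplane \<sigma>)"
  unfolding ray_halfplane_def by (rule convex_halfspace_gt)

lemma ray_halfplane_subset: "ray_halfplane \<sigma> \<subseteq> - \<real>\<^sub>\<le>\<^sub>0"
  unfolding ray_halfplane_def by (auto simp: complex_nonpos_Reals_iff inner_complex_def)

lemma ray_point_in_halfplane: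
  assumes "\<sigma> \<in> {-1, 1}" "0 \<le> \<phi>'" "\<phi>' \<le> pi / 6" "0 < x" "0 \<le> s"
  shows "of_real x + of_real s * ray_dir \<phi>' \<sigma> \<in> ray_halfplane \<sigma>"
proof -
  have "inner (Complex 1 \<sigma>) (of_real x + of_real s * ray_dir \<phi>' \<sigma>) = x + s * (cos \<phi>' - sin \<phi>')"
    using assms(1) by (auto simp: ray_dir_def inner_complex_def algebra_simps)
  also have "\<dots> > 0"
    using sin_le_half_le_cos[OF assms(2,3)] assms(4,5) by (intro add_pos_nonneg mult_nonneg_nonneg) auto
  finally show ?thesis
    unfolding ray_halfplane_def by simp
qed

lemma Re_mult_ray_dir_nonpos:
  assumes "\<sigma> \<in> {-1, 1}" "\<phi> \<le> \<phi>'" "\<phi> + \<phi>' \<le> pi" "p \<in> closure (sector \<phi>)"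
  shows "Re (p * ray_dir \<phi>' \<sigma>) \<le> 0"
proof -
  have "sector \<phi> \<subseteq> {p. Re (p * ray_dir \<phi>' \<sigma>) \<le> 0}"
  proof
    fix q
    assume "q \<in> sector \<phi>"
    define \<theta> where "\<theta> = Arg q"
    have "- \<phi> < \<theta>" "\<theta> < \<phi>"
      using \<open>q \<in> sector \<phi>\<close> unfolding sector_def \<theta>_def by auto
    hence sin_nonneg: "0 \<le> sin (\<phi>' + \<sigma> * \<theta>)"
      using assms(1-3) by (intro sin_ge_zero) auto
    have q_rcis: "q = rcis (norm q) \<theta>"
      unfolding \<theta>_def by (simp add: rcis_cmod_Arg)
    have "Re q = norm q * cos \<theta>" "Im q = norm q * sin \<theta>"
      by (subst q_rcis, simp)+
    hence Re_eq: "Re (q * ray_dir \<phi>' \<sigma>) = - norm q * sin (\<phi>' + \<sigma> * \<theta>)"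
      using assms(1) by (auto simp: ray_dir_def sin_add algebra_simps)
    have "Re (q * ray_dir \<phi>' \<sigma>) \<le> 0"
      unfolding Re_eq using sin_nonneg by simp
    thus "q \<in> {p. Re (p * ray_dir \<phi>' \<sigma>) \<le> 0}"
      by blast
  qed
  moreover have "closed {p. Re (p * ray_dir \<phi>' \<sigma>) \<le> 0}"
    by (intro closed_Collect_le continuous_intros)
  ultimately show ?thesis
    using closure_minimal assms(4) by blast
qed

section \<open>The inverse Laplace transform of r\<close>

definition r_kernel :: "complex \<Rightarrow> real \<Rightarrow> complex \<Rightarrow> complex" where
  "r_kernel p t y = exp (p * y) * r_fun y t"

definition ray_integral :: "real \<Rightarrow> real \<Rightarrow> complex \<Rightarrow> real \<Rightarrow> real \<Rightarrow> complex" where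
  "ray_integral \<phi>' \<sigma> p t c =
     integral {0..} (\<lambda>s. r_kernel p t (of_real c + of_real s * ray_dir \<phi>' \<sigma>) * ray_dir \<phi>' \<sigma>)"

lemma r_kernel_holomorphic:
  assumes "0 \<le> t"
  shows "r_kernel p t holomorphic_on ray_halfplane \<sigma>"
proof -
  have "(\<lambda>y. exp (p * y) * r_fun y t) holomorphic_on - \<real>\<^sub>\<le>\<^sub>0"
    by (intro holomorphic_intros r_fun_holomorphic assms)
  thus ?thesis
    unfolding r_kernel_def [abs_def] using ray_halfplane_subset by (rule holomorphic_on_subset)
qed

lemma norm_r_kernel_ray_le:
  assumes "\<sigma> \<in> {-1, 1}" "0 \<le> \<phi>'" "\<phi>' \<le> pi / 6" "0 < x" "0 \<le> s" "0 \<le> t"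
    and "Re (p * ray_dir \<phi>' \<sigma>) \<le> 0"
  shows "norm (r_kernel p t (of_real x + of_real s * ray_dir \<phi>' \<sigma>))
    \<le> 120 * exp (x * norm p) * (x + s) powr (- 4 / 3)"
proof -
  define y where "y = of_real x + of_real s * ray_dir \<phi>' \<sigma>"
  have y_ge: "(x + s) / 2 \<le> norm y"
    unfolding y_def using assms by (intro norm_ray_point_ge) auto
  hence "y \<noteq> 0"
    using assms by auto
  have "x * Re p \<le> x * norm p"
    using assms(4) complex_Re_le_cmod by (intro mult_left_mono) auto
  moreover have "s * Re (p * ray_dir \<phi>' \<sigma>) \<le> 0"
    using assms(5,7) by (simp add: mult_nonneg_nonpos)
  moreover have "Re (p * y) = x * Re p + s * Re (p * ray_dir \<phi>' \<sigma>)"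
    by (simp add: y_def algebra_simps)
  ultimately have exp_le: "norm (exp (p * y)) \<le> exp (x * norm p)"
    by simp
  have "(1 / 4 :: real) \<le> 2 powr (- 4 / 3)"
    using powr_mono[of "- 2" "- 4 / 3" "2::real"] by (simp add: powr_minus)
  have "norm (r_fun y t) \<le> 30 * norm y powr (- 4 / 3)"
    using \<open>y \<noteq> 0\<close> assms(6) by (rule norm_r_fun_le)
  also have "\<dots> \<le> 30 * ((x + s) / 2) powr (- 4 / 3)"
    using y_ge assms(4,5) by (intro mult_left_mono powr_mono2') auto
  also have "\<dots> = 30 * ((x + s) powr (- 4 / 3) / 2 powr (- 4 / 3))"
    by (simp add: powr_divide)
  also have "\<dots> \<le> 30 * ((x + s) powr (- 4 / 3) / (1 / 4))"
    using \<open>1 / 4 \<le> 2 powr (- 4 / 3)\<close> by (intro mult_left_mono divide_left_mono) auto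
  finally have r_le: "norm (r_fun y t) \<le> 120 * (x + s) powr (- 4 / 3)"
    by simp
  have "norm (r_kernel p t y) = norm (exp (p * y)) * norm (r_fun y t)"
    by (simp add: r_kernel_def norm_mult)
  also have "\<dots> \<le> exp (x * norm p) * (120 * (x + s) powr (- 4 / 3))"
    using exp_le r_le by (intro mult_mono) auto
  finally show ?thesis
    by (simp add: y_def)
qed

lemma ray_integral_integrable_norm_le:
  assumes "\<sigma> \<in> {-1, 1}" "0 \<le> \<phi>'" "\<phi>' \<le> pi / 6" "0 < c" "0 \<le> t"
    and "Re (p * ray_dir \<phi>' \<sigma>) \<le> 0"
  shows "(\<lambda>s. r_kernel p t (of_real c + of_real s * ray_dir \<phi>' \<sigma>) * ray_dir \<phi>' \<sigma>) integrable_on {0..}"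
    and "norm (ray_integral \<phi>' \<sigma> p t c) \<le> 360 * exp (c * norm p) * c powr (- 1 / 3)"
proof -
  define m where "m = (\<lambda>s. 120 * exp (c * norm p) * (c + s) powr (- 4 / 3))"
  have m_integral: "(m has_integral 360 * exp (c * norm p) * c powr (- 1 / 3)) {0..}"
    using has_integral_mult_right[OF has_integral_powr_plus_to_inf[of "- 4 / 3" c], of "120 * exp (c * norm p)"]
      assms(4) by (simp add: m_def mult.assoc)
  have continuous: "continuous_on (ray_halfplane \<sigma>) (r_kernel p t)"
    using r_kernel_holomorphic[OF assms(5)] by (rule holomorphic_on_imp_continuous_on)
  have on_ray: "of_real c + of_real s * ray_dir \<phi>' \<sigma> \<in> ray_halfplane \<sigma>" if "0 \<le> s" for s
    using assms(1-4) that by (rule ray_point_in_halfplane)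
  have bound: "norm (r_kernel p t (of_real c + of_real s * ray_dir \<phi>' \<sigma>)) \<le> m s" if "0 \<le> s" for s
    unfolding m_def using assms(1-4) that assms(5,6) by (rule norm_r_kernel_ray_le)
  note ray = integrable_on_ray[OF continuous on_ray bound has_integral_integrable[OF m_integral]]
  show "(\<lambda>s. r_kernel p t (of_real c + of_real s * ray_dir \<phi>' \<sigma>) * ray_dir \<phi>' \<sigma>) integrable_on {0..}"
    by (rule ray(1))
  show "norm (ray_integral \<phi>' \<sigma> p t c) \<le> 360 * exp (c * norm p) * c powr (- 1 / 3)"
    using ray(2) unfolding ray_integral_def norm_ray_dir[OF assms(1)] integral_unique[OF m_integral]
    by simp
qed

lemma ray_integral_diff:
  assumes "\<sigma> \<in> {-1, 1}" "0 \<le> \<phi>'" "\<phi>' \<le> pi / 6" "0 < a" "a \<le> b" "0 \<le> t"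
    and "Re (p * ray_dir \<phi>' \<sigma>) \<le> 0"
  shows "ray_integral \<phi>' \<sigma> p t a - ray_integral \<phi>' \<sigma> p t b = integral {a..b} (\<lambda>x. r_kernel p t (of_real x))"
  unfolding ray_integral_def
proof (rule integral_parallel_rays_diff[OF open_ray_halfplane convex_ray_halfplane
      r_kernel_holomorphic[OF assms(6)] assms(5)])
  fix x s :: real
  assume "x \<in> {a..b}" "0 \<le> s"
  with assms show "of_real x + of_real s * ray_dir \<phi>' \<sigma> \<in> ray_halfplane \<sigma>"
    by (intro ray_point_in_halfplane) auto
  have "norm (r_kernel p t (of_real x + of_real s * ray_dir \<phi>' \<sigma>))
      \<le> 120 * exp (x * norm p) * (x + s) powr (- 4 / 3)"
    using \<open>x \<in> {a..b}\<close> \<open>0 \<le> s\<close> assms by (intro norm_r_kernel_ray_le) auto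
  also have "\<dots> \<le> 120 * exp (b * norm p) * (a + s) powr (- 4 / 3)"
    using \<open>x \<in> {a..b}\<close> \<open>0 \<le> s\<close> assms(4)
    by (intro mult_mono powr_mono2' mult_left_mono) (auto intro: mult_right_mono)
  finally show "norm (r_kernel p t (of_real x + of_real s * ray_dir \<phi>' \<sigma>))
      \<le> 120 * exp (b * norm p) * (a + s) powr (- 4 / 3)" .
next
  have "((\<lambda>s. (a + s) powr (- 4 / 3)) has_integral 3 * a powr (- 1 / 3)) {0..}"
    using has_integral_powr_plus_to_inf[of "- 4 / 3" a] assms(4) by (simp add: mult.commute)
  hence "(\<lambda>s. (a + s) powr (- 4 / 3)) integrable_on {0..}"
    by blast
  then show "(\<lambda>s. 120 * exp (b * norm p) * (a + s) powr (- 4 / 3)) integrable_on {0..}"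
    using integrable_on_cmult_left[of _ _ "120 * exp (b * norm p)"] by simp
  show "((\<lambda>s. 120 * exp (b * norm p) * (a + s) powr (- 4 / 3)) \<longlongrightarrow> 0) at_top"
    by (intro tendsto_mult_right_zero tendsto_powr_plus_at_top) simp
qed

lemma invLaplace_eq_ray_integrals:
  assumes "0 \<le> \<phi>'" "\<phi>' \<le> pi / 6" "0 < c" "0 \<le> t"
    and "Re (p * ray_dir \<phi>' 1) \<le> 0" "Re (p * ray_dir \<phi>' (- 1)) \<le> 0"
  shows "invLaplace c \<phi>' r_fun p t
    = 1 / (2 * of_real pi * \<i>) * (ray_integral \<phi>' 1 p t c - ray_integral \<phi>' (- 1) p t c)"
proof -
  define h where "h = (\<lambda>s. exp (p * contour_pt c \<phi>' s) * r_fun (contour_pt c \<phi>' s) t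
    * (\<i> * exp (\<i> * of_real (\<phi>' * sgn s))))"
  define g where "g = (\<lambda>\<sigma> s. r_kernel p t (of_real c + of_real s * ray_dir \<phi>' \<sigma>) * ray_dir \<phi>' \<sigma>)"
  have h_eq: "h s = of_real (sgn s) * g (sgn s) \<bar>s\<bar>" if "s \<noteq> 0" for s
    unfolding h_def g_def r_kernel_def contour_pt_eq_ray[OF that] contour_factor_eq_ray_dir[OF that]
    by (simp add: ac_simps)
  have ray: "(g \<sigma> has_integral ray_integral \<phi>' \<sigma> p t c) {0..}"
    if "\<sigma> \<in> {-1, 1}" "Re (p * ray_dir \<phi>' \<sigma>) \<le> 0" for \<sigma>
    using ray_integral_integrable_norm_le(1)[OF that(1) assms(1-4) that(2)]
    unfolding g_def ray_integral_def by (rule integrable_integral)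
  have upper: "(h has_integral ray_integral \<phi>' 1 p t c) {0..}"
  proof (rule has_integral_spike[OF negligible_sing[of 0] _ ray[of 1]])
    fix s :: real
    assume "s \<in> {0..} - {0}"
    hence "0 < s"
      by auto
    thus "h s = g 1 s"
      using h_eq[of s] by simp
  qed (use assms(5) in simp_all)
  have lower: "(h has_integral - ray_integral \<phi>' (- 1) p t c) {..0}"
  proof (rule has_integral_spike[OF negligible_sing[of 0]])
    have "((\<lambda>s. - g (- 1) s) has_integral - ray_integral \<phi>' (- 1) p t c) {0..}"
      using ray[of "- 1"] assms(6) by (intro has_integral_neg) simp
    from has_integral_reflect_image[OF this]
    show "((\<lambda>s. - g (- 1) (- s)) has_integral - ray_integral \<phi>' (- 1) p t c) {..0}"
      by simp
    fix s :: real
    assume "s \<in> {..0} - {0}"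
    hence "s < 0"
      by auto
    thus "h s = - g (- 1) (- s)"
      using h_eq[of s] by simp
  qed
  from has_integral_split_at_0[OF upper lower]
  have "integral UNIV h = ray_integral \<phi>' 1 p t c - ray_integral \<phi>' (- 1) p t c"
    by (simp add: integral_unique)
  thus ?thesis
    unfolding invLaplace_def h_def by simp
qed

lemma ray_integral_difference_independent:
  assumes "0 \<le> \<phi>'" "\<phi>' \<le> pi / 6" "0 < a" "0 < b" "0 \<le> t"
    and "Re (p * ray_dir \<phi>' 1) \<le> 0" "Re (p * ray_dir \<phi>' (- 1)) \<le> 0"
  shows "ray_integral \<phi>' 1 p t a - ray_integral \<phi>' (- 1) p t a
       = ray_integral \<phi>' 1 p t b - ray_integral \<phi>' (- 1) p t b"
proof -
  have *: "ray_integral \<phi>' 1 p t x - ray_integral \<phi>' (- 1) p t x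
      = ray_integral \<phi>' 1 p t y - ray_integral \<phi>' (- 1) p t y" if "0 < x" "x \<le> y" for x y
    using ray_integral_diff[of 1 \<phi>' x y t p] ray_integral_diff[of "- 1" \<phi>' x y t p] assms that
    by (simp add: algebra_simps)
  show ?thesis
  proof (cases "a \<le> b")
    case True
    with * assms(3) show ?thesis
      by blast
  next
    case False
    hence "b \<le> a"
      by simp
    with *[OF assms(4)] show ?thesis
      by simp
  qed
qed

lemma norm_le_optimal_abscissa:
  fixes v :: "'a::real_normed_vector"
  assumes "0 \<le> \<rho>" and bound: "\<And>c. 0 < c \<Longrightarrow> norm v \<le> K * exp (c * \<rho>) * c powr (- 1 / 3)"
  shows "norm v \<le> K * exp 1 * \<rho> powr (1 / 3)"
proof (cases "\<rho> = 0")
  case False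
  with assms(1) have "norm v \<le> K * exp (1 / \<rho> * \<rho>) * (1 / \<rho>) powr (- 1 / 3)"
    by (intro bound) simp
  also have "\<dots> = K * exp 1 * \<rho> powr (1 / 3)"
    using False by (simp add: powr_divide powr_minus_divide)
  finally show ?thesis .
next
  case True
  have "((\<lambda>c. K * c powr (- 1 / 3 :: real)) \<longlongrightarrow> 0) at_top"
    using tendsto_powr_plus_at_top[of "- 1 / 3" 0] by (intro tendsto_mult_right_zero) simp
  moreover have "\<forall>\<^sub>F c in at_top. norm v \<le> K * c powr (- 1 / 3)"
    using eventually_gt_at_top[of 0]
  proof eventually_elim
    case (elim c)
    show ?case
      using bound[OF elim] True by simp
  qed
  ultimately have "norm v \<le> 0"
    by (rule tendsto_lowerbound) simp
  with True show ?thesis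
    by simp
qed

lemma norm_invLaplace_r_fun_le:
  assumes "\<phi> \<le> \<phi>'" "0 \<le> \<phi>'" "\<phi>' \<le> pi / 6" "0 < c" "0 \<le> t" "p \<in> closure (sector \<phi>)"
  shows "norm (invLaplace c \<phi>' r_fun p t) \<le> 720 * exp 1 * norm p powr (1 / 3)"
proof -
  have Re_nonpos: "Re (p * ray_dir \<phi>' \<sigma>) \<le> 0" if "\<sigma> \<in> {-1, 1}" for \<sigma>
    using assms that by (intro Re_mult_ray_dir_nonpos) auto
  define \<Psi> where "\<Psi> c' = ray_integral \<phi>' 1 p t c' - ray_integral \<phi>' (- 1) p t c'" for c'
  have \<Psi>_const: "\<Psi> c' = \<Psi> c" if "0 < c'" for c'
    unfolding \<Psi>_def using assms that Re_nonpos
    by (intro ray_integral_difference_independent) auto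
  have \<Psi>_le: "norm (\<Psi> c') \<le> 720 * exp (c' * norm p) * c' powr (- 1 / 3)" if "0 < c'" for c'
  proof -
    have "norm (\<Psi> c') \<le> norm (ray_integral \<phi>' 1 p t c') + norm (ray_integral \<phi>' (- 1) p t c')"
      unfolding \<Psi>_def by (rule norm_triangle_ineq4)
    also have "\<dots> \<le> 360 * exp (c' * norm p) * c' powr (- 1 / 3) + 360 * exp (c' * norm p) * c' powr (- 1 / 3)"
      using assms that Re_nonpos by (intro add_mono ray_integral_integrable_norm_le(2)) auto
    finally show ?thesis
      by simp
  qed
  have "norm (\<Psi> c) \<le> 720 * exp (c' * norm p) * c' powr (- 1 / 3)" if "0 < c'" for c'
    using \<Psi>_le[OF that] unfolding \<Psi>_const[OF that] .
  hence "norm (\<Psi> c) \<le> 720 * exp 1 * norm p powr (1 / 3)"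
    by (rule norm_le_optimal_abscissa[OF norm_ge_zero])
  moreover have "invLaplace c \<phi>' r_fun p t = 1 / (2 * of_real pi * \<i>) * \<Psi> c"
    unfolding \<Psi>_def using assms(2-5) Re_nonpos[of 1] Re_nonpos[of "- 1"]
    by (intro invLaplace_eq_ray_integrals) auto
  hence "norm (invLaplace c \<phi>' r_fun p t) = norm (\<Psi> c) / (2 * pi)"
    by (simp add: norm_mult norm_divide)
  moreover have "norm (\<Psi> c) / (2 * pi) \<le> norm (\<Psi> c)"
    using pi_gt3 by (simp add: divide_le_eq mult_le_cancel_left1)
  ultimately show ?thesis
    by linarith
qed

section \<open>The weighted norm\<close>

lemma one_plus_square_mult_exp_le: "0 \<le> \<rho> \<Longrightarrow> (1 + \<rho>\<^sup>2) * exp (- \<rho> / 2) \<le> (16::real)"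
proof -
  assume "0 \<le> \<rho>"
  have "(1 + \<rho> / 4)\<^sup>2 \<le> (exp (\<rho> / 4))\<^sup>2"
    using exp_ge_add_one_self[of "\<rho> / 4"] \<open>0 \<le> \<rho>\<close> by (intro power_mono) auto
  also have "\<dots> = exp (\<rho> / 2)"
    by (simp add: power2_eq_square flip: exp_add)
  finally have "1 + \<rho>\<^sup>2 \<le> 16 * exp (\<rho> / 2)"
    using \<open>0 \<le> \<rho>\<close> by (simp add: power2_eq_square algebra_simps)
  thus ?thesis
    by (simp add: exp_minus field_simps)
qed

lemma powr_one_third_mult_exp_le: "0 \<le> u \<Longrightarrow> u powr (1 / 3) * exp (- u / 2) \<le> (2::real)"
proof -
  assume "0 \<le> u"
  have "u powr (1 / 3) \<le> 1 + u"
  proof (cases "u \<le> 1")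
    case True
    thus ?thesis
      using powr_mono2[of "1 / 3" u 1] \<open>0 \<le> u\<close> by simp
  next
    case False
    thus ?thesis
      using powr_mono[of "1 / 3" 1 u] by simp
  qed
  also have "\<dots> \<le> 2 * exp (u / 2)"
    using exp_ge_add_one_self[of "u / 2"] by linarith
  finally show ?thesis
    by (simp add: exp_minus field_simps)
qed

lemma weight_mult_powr_one_third_le:
  fixes \<rho> \<nu> :: real
  assumes "0 \<le> \<rho>" "1 \<le> \<nu>"
  shows "(1 + \<rho>\<^sup>2) * exp (- \<nu> * \<rho>) * \<rho> powr (1 / 3) \<le> 32 * \<nu> powr (- 1 / 3)"
proof -
  define u where "u = \<nu> * \<rho>"
  have "0 \<le> u" "\<rho> \<le> u"
    using assms by (auto simp: u_def mult_right_mono[of 1 \<nu> \<rho>, simplified])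
  have "(1 + \<rho>\<^sup>2) * exp (- \<nu> * \<rho>) * \<rho> powr (1 / 3)
      = ((1 + \<rho>\<^sup>2) * exp (- u / 2)) * (u powr (1 / 3) * exp (- u / 2)) * \<nu> powr (- 1 / 3)"
    using assms by (simp add: u_def powr_mult powr_minus_divide exp_add [symmetric] field_simps)
  also have "\<dots> \<le> ((1 + \<rho>\<^sup>2) * exp (- \<rho> / 2)) * 2 * \<nu> powr (- 1 / 3)"
    using \<open>\<rho> \<le> u\<close> powr_one_third_mult_exp_le[OF \<open>0 \<le> u\<close>]
    by (intro mult_right_mono mult_mono) auto
  also have "\<dots> \<le> 16 * 2 * \<nu> powr (- 1 / 3)"
    using one_plus_square_mult_exp_le[OF assms(1)] by (intro mult_right_mono) auto
  finally show ?thesis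
    by simp
qed

lemma nu_norm_le:
  assumes "0 < \<phi>" "0 \<le> T"
    and bound: "\<And>p t. p \<in> closure (sector \<phi>) \<Longrightarrow> t \<in> {0..T} \<Longrightarrow>
      (1 + (norm p)\<^sup>2) * exp (- \<nu> * norm p) * norm (G p t) \<le> B"
  shows "nu_norm \<phi> T \<nu> G \<le> ereal (\<bar>M0\<bar> * B)"
proof -
  define S where "S = (SUP (p, t) \<in> closure (sector \<phi>) \<times> {0..T}.
    ereal ((1 + (cmod p)\<^sup>2) * exp (- \<nu> * cmod p) * cmod (G p t)))"
  have "1 \<in> sector \<phi>"
    using assms(1) by (simp add: sector_def)
  hence "(1, 0) \<in> closure (sector \<phi>) \<times> {0..T}"
    using assms(2) closure_subset by auto
  hence "ereal 0 \<le> S"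
    unfolding S_def by (rule SUP_upper2) simp
  moreover have "S \<le> ereal B"
    unfolding S_def
  proof (rule SUP_least)
    fix x
    assume x: "x \<in> closure (sector \<phi>) \<times> {0..T}"
    obtain p t where "x = (p, t)"
      by (cases x)
    with x have "(1 + (norm p)\<^sup>2) * exp (- \<nu> * norm p) * norm (G p t) \<le> B"
      by (intro bound) auto
    with \<open>x = (p, t)\<close> show "(case x of (p, t) \<Rightarrow> ereal ((1 + (cmod p)\<^sup>2) * exp (- \<nu> * cmod p) * cmod (G p t)))
        \<le> ereal B"
      by simp
  qed
  ultimately obtain x where x: "S = ereal x" "0 \<le> x" "x \<le> B"
    by (cases S) auto
  have "M0 * x \<le> \<bar>M0\<bar> * x"
    using x(2) by (intro mult_right_mono) auto
  also have "\<dots> \<le> \<bar>M0\<bar> * B"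
    using x(3) by (intro mult_left_mono) auto
  finally show ?thesis
    unfolding nu_norm_def S_def [symmetric] x(1) by simp
qed

lemma weighted_norm_invLaplace_r_fun_le:
  assumes "\<phi> \<le> \<phi>'" "0 \<le> \<phi>'" "\<phi>' \<le> pi / 6" "0 < c" "0 \<le> t" "p \<in> closure (sector \<phi>)" "1 \<le> \<nu>"
  shows "(1 + (norm p)\<^sup>2) * exp (- \<nu> * norm p) * norm (invLaplace c \<phi>' r_fun p t)
    \<le> 23040 * exp 1 * \<nu> powr (- 1 / 3)"
proof -
  have "norm (invLaplace c \<phi>' r_fun p t) \<le> 720 * exp 1 * norm p powr (1 / 3)"
    using assms by (intro norm_invLaplace_r_fun_le)
  hence "(1 + (norm p)\<^sup>2) * exp (- \<nu> * norm p) * norm (invLaplace c \<phi>' r_fun p t)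
      \<le> (1 + (norm p)\<^sup>2) * exp (- \<nu> * norm p) * (720 * exp 1 * norm p powr (1 / 3))"
    by (rule mult_left_mono) simp
  also have "\<dots> = 720 * exp 1 * ((1 + (norm p)\<^sup>2) * exp (- \<nu> * norm p) * norm p powr (1 / 3))"
    by (simp only: ac_simps)
  also have "\<dots> \<le> 720 * exp 1 * (32 * \<nu> powr (- 1 / 3))"
    using assms(7) by (intro mult_left_mono weight_mult_powr_one_third_le) auto
  finally show ?thesis
    by simp
qed

theorem corollary24:
  fixes \<phi> \<phi>' c :: real
  assumes "0 < \<phi>" and "\<phi> < \<phi>'" and "\<phi>' < pi / 6" and "0 < c"
  shows "\<exists>C::real. \<forall>T>0. \<forall>\<nu>>1.
           nu_norm \<phi> T \<nu> (invLaplace c \<phi>' r_fun) < ereal (C * \<nu> powr (- 1 / 3))"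
proof (intro exI allI impI)
  define K :: real where "K = 23040 * exp 1"
  fix T \<nu> :: real
  assume "0 < T" "1 < \<nu>"
  have "(1 + (norm p)\<^sup>2) * exp (- \<nu> * norm p) * norm (invLaplace c \<phi>' r_fun p t) \<le> K * \<nu> powr (- 1 / 3)"
    if "p \<in> closure (sector \<phi>)" "t \<in> {0..T}" for p t
    unfolding K_def using assms that \<open>1 < \<nu>\<close> by (intro weighted_norm_invLaplace_r_fun_le) auto
  hence "nu_norm \<phi> T \<nu> (invLaplace c \<phi>' r_fun) \<le> ereal (\<bar>M0\<bar> * (K * \<nu> powr (- 1 / 3)))"
    using \<open>0 < \<phi>\<close> \<open>0 < T\<close> by (intro nu_norm_le) auto
  also have "\<dots> < ereal ((\<bar>M0\<bar> + 1) * K * \<nu> powr (- 1 / 3))"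
    using \<open>1 < \<nu>\<close> by (simp add: K_def algebra_simps)
  finally show "nu_norm \<phi> T \<nu> (invLaplace c \<phi>' r_fun) < ereal ((\<bar>M0\<bar> + 1) * K * \<nu> powr (- 1 / 3))" .
qed

end
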